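(* Let $1\le k\le n-1$ with $n<6$. Then there are no indecomposable rank $2$ modules in $\mathrm{CM}(B_{k,n})$.
   Context: $\Gamma_n$ is the quiver with vertices $1,\dots,n$ on a cycle, arrows $x_i\colon i-1\to i$, $y_i\colon i\to i-1$. $B_{k,n}$ is its completed path algebra modulo the closure of the ideal generated by $xy=yx$ and $x^k=y^{n-k}$ at every vertex; its centre is $Z=\mathbb{C}[[t]]$, $t=\sum_ix_iy_i$. $\mathrm{CM}(B_{k,n})$ is the category of (maximal) Cohen–Macaulay $B_{k,n}$-modules, i.e.\ $B_{k,n}$-modules that are free of finite rank over $Z$. The rank of a module $M$ is $\mathrm{len}(M\otimes_Z K)$ where $K$ is the field of fractions of $Z$ (equivalently, the $Z$-rank of $e_jM$ for any vertex idempotent $e_j$). *)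

theory Defs
  imports "HOL-Computational_Algebra.Formal_Power_Series" "Jordan_Normal_Form.Matrix"
begin

text \<open>A CM module over B_{k,n} of rank r is modelled (after choosing Z-bases) by:
  vertices 0..n-1 (cyclic), at each vertex the free Z-module Z^r with Z = complex fps,
  arrows x_i : (i-1) -> i given by r x r matrices X i, y_i : i -> (i-1) given by Y i.\<close>

definition prev_v :: "nat \<Rightarrow> nat \<Rightarrow> nat" where
  "prev_v n i = (i + n - 1) mod n"

text \<open>the path x^m starting at vertex i (i -> i+1 -> ... -> i+m)\<close>
fun xpath :: "nat \<Rightarrow> nat \<Rightarrow> (nat \<Rightarrow> complex fps mat) \<Rightarrow> nat \<Rightarrow> nat \<Rightarrow> complex fps mat" where
  "xpath n r X i 0 = 1\<^sub>m r"
| "xpath n r X i (Suc m) = X ((i + m + 1) mod n) * xpath n r X i m"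

text \<open>the path y^m starting at vertex i (i -> i-1 -> ... -> i-m)\<close>
fun ypath :: "nat \<Rightarrow> nat \<Rightarrow> (nat \<Rightarrow> complex fps mat) \<Rightarrow> nat \<Rightarrow> nat \<Rightarrow> complex fps mat" where
  "ypath n r Y i 0 = 1\<^sub>m r"
| "ypath n r Y i (Suc m) = Y ((i + (n - m mod n)) mod n) * ypath n r Y i m"

text \<open>(X,Y) defines a B_{k,n}-module whose e_j-parts are Z^r, and such that the central
  element t acts as multiplication by the power series variable.\<close>
definition cm_rep :: "nat \<Rightarrow> nat \<Rightarrow> nat \<Rightarrow> (nat \<Rightarrow> complex fps mat) \<Rightarrow> (nat \<Rightarrow> complex fps mat) \<Rightarrow> bool" where
  "cm_rep k n r X Y \<longleftrightarrow>
     (\<forall>i<n. X i \<in> carrier_mat r r \<and> Y i \<in> carrier_mat r r) \<and>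
     (\<forall>i<n. X i * Y i = Y ((i + 1) mod n) * X ((i + 1) mod n)) \<and>
     (\<forall>i<n. xpath n r X i k = ypath n r Y i (n - k)) \<and>
     (\<forall>i<n. X i * Y i = fps_X \<cdot>\<^sub>m 1\<^sub>m r)"

definition submod :: "nat \<Rightarrow> complex fps vec set \<Rightarrow> bool" where
  "submod r S \<longleftrightarrow> S \<subseteq> carrier_vec r \<and> 0\<^sub>v r \<in> S \<and>
     (\<forall>u\<in>S. \<forall>v\<in>S. u + v \<in> S) \<and> (\<forall>c. \<forall>v\<in>S. c \<cdot>\<^sub>v v \<in> S)"

definition subrep :: "nat \<Rightarrow> nat \<Rightarrow> (nat \<Rightarrow> complex fps mat) \<Rightarrow> (nat \<Rightarrow> complex fps mat)
    \<Rightarrow> (nat \<Rightarrow> complex fps vec set) \<Rightarrow> bool" where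
  "subrep n r X Y N \<longleftrightarrow> (\<forall>i<n. submod r (N i)) \<and>
     (\<forall>i<n. \<forall>v\<in>N (prev_v n i). X i *\<^sub>v v \<in> N i) \<and>
     (\<forall>i<n. \<forall>v\<in>N i. Y i *\<^sub>v v \<in> N (prev_v n i))"

definition decomposable :: "nat \<Rightarrow> nat \<Rightarrow> (nat \<Rightarrow> complex fps mat) \<Rightarrow> (nat \<Rightarrow> complex fps mat) \<Rightarrow> bool" where
  "decomposable n r X Y \<longleftrightarrow> (\<exists>N1 N2. subrep n r X Y N1 \<and> subrep n r X Y N2 \<and>
     (\<exists>i<n. N1 i \<noteq> {0\<^sub>v r}) \<and> (\<exists>i<n. N2 i \<noteq> {0\<^sub>v r}) \<and>
     (\<forall>i<n. \<forall>v\<in>carrier_vec r. \<exists>!p. fst p \<in> N1 i \<and> snd p \<in> N2 i \<and> v = fst p + snd p))"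

definition indecomposable :: "nat \<Rightarrow> nat \<Rightarrow> (nat \<Rightarrow> complex fps mat) \<Rightarrow> (nat \<Rightarrow> complex fps mat) \<Rightarrow> bool" where
  "indecomposable n r X Y \<longleftrightarrow> 0 < n \<and> 0 < r \<and> \<not> decomposable n r X Y"

end

theory Submission
  imports Defs "Jordan_Normal_Form.Determinant"
begin

(*
  A rank 2 module consists of 2x2 matrices X_i, Y_i over Z = C[[t]] with X_i Y_i = Y_i X_i = t,
  and the partial products P_j = X_j ... X_1 lead from P_0 = 1 to P_n = t^(n-k).  Suppose u, w is a
  basis of Z^2 such that at every vertex j the vectors P_j u and P_j w, divided by their contents,
  still form a basis.  Then the saturated lines through P_j u and through P_j w are two
  subrepresentations whose direct sum is everything, so the module decomposes.

  Let E_j be the content valuation of P_j and s_j = val det P_j - 2 E_j its defect.  A primitive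
  u satisfies val (P_j u) <= val det P_j - E_j, and a basis works at j as soon as one of its
  vectors attains this bound.  Since every X_j divides t, s moves by at most 1 per step, and attaining the bound is
  inherited along every step on which s does not increase.  As s_0 = s_n = 0, for n <= 5 the only
  shapes are a single peak of height 2, from which the bound propagates everywhere, or at most two
  plateaus of height 1, each served by one vector of the basis.
*)

section \<open>Matrices over commutative rings\<close>

lemma mult_mat_vec_zero:
  "A \<in> carrier_mat m n \<Longrightarrow> A *\<^sub>v 0\<^sub>v n = (0\<^sub>v m :: 'a::semiring_0 vec)"
  by (intro eq_vecI) (auto simp: scalar_prod_def)

lemma smult_mat_mult_mat_vec:
  fixes A :: "'a::comm_semiring_0 mat"
  shows "A \<in> carrier_mat m n \<Longrightarrow> v \<in> carrier_vec n \<Longrightarrow> (c \<cdot>\<^sub>m A) *\<^sub>v v = c \<cdot>\<^sub>v (A *\<^sub>v v)"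
  by (intro eq_vecI) (auto simp: scalar_prod_def sum_distrib_left ac_simps)

lemma mult_mat_vec_smult:
  fixes A :: "'a::comm_semiring_0 mat"
  shows "A \<in> carrier_mat m n \<Longrightarrow> v \<in> carrier_vec n \<Longrightarrow> A *\<^sub>v (c \<cdot>\<^sub>v v) = c \<cdot>\<^sub>v (A *\<^sub>v v)"
  by (intro eq_vecI) (auto simp: scalar_prod_def sum_distrib_left ac_simps)

lemma one_smult_mat [simp]: "(1 :: 'a::monoid_mult) \<cdot>\<^sub>m A = A"
  by (intro eq_matI) auto

lemma smult_smult_mat [simp]: "(a :: 'a::semigroup_mult) \<cdot>\<^sub>m (b \<cdot>\<^sub>m A) = (a * b) \<cdot>\<^sub>m A"
  by (intro eq_matI) (auto simp: mult.assoc)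

lemma smult_vec_eq_zero_iff:
  fixes v :: "'a::idom vec"
  shows "v \<in> carrier_vec n \<Longrightarrow> c \<cdot>\<^sub>v v = 0\<^sub>v n \<longleftrightarrow> c = 0 \<or> v = 0\<^sub>v n"
  by (auto simp: vec_eq_iff)

lemma adj_mat_mult_mat_vec:
  fixes A :: "'a::comm_ring_1 mat"
  assumes A: "A \<in> carrier_mat n n" and v: "v \<in> carrier_vec n"
  shows "adj_mat A *\<^sub>v (A *\<^sub>v v) = det A \<cdot>\<^sub>v v"
proof -
  have "adj_mat A *\<^sub>v (A *\<^sub>v v) = (adj_mat A * A) *\<^sub>v v"
    using adj_mat(1)[OF A] A v by (simp add: assoc_mult_mat_vec)
  also have "\<dots> = det A \<cdot>\<^sub>v v"
    using adj_mat(3)[OF A] v by auto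
  finally show ?thesis .
qed

lemma mult_mat_vec_neq_zero:
  fixes A :: "'a::idom mat"
  assumes A: "A \<in> carrier_mat n n" and "det A \<noteq> 0" and v: "v \<in> carrier_vec n" and "v \<noteq> 0\<^sub>v n"
  shows "A *\<^sub>v v \<noteq> 0\<^sub>v n"
proof
  assume "A *\<^sub>v v = 0\<^sub>v n"
  then have "det A \<cdot>\<^sub>v v = 0\<^sub>v n"
    using adj_mat_mult_mat_vec[OF A v] mult_mat_vec_zero[OF adj_mat(1)[OF A]] by simp
  with assms show False
    by (simp add: smult_vec_eq_zero_iff)
qed

lemma det_2:
  assumes "(A :: 'a::comm_ring_1 mat) \<in> carrier_mat 2 2"
  shows "det A = A $$ (0,0) * A $$ (1,1) - A $$ (0,1) * A $$ (1,0)"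
proof -
  have "det A = (\<Sum>i<2. A $$ (i,0) * cofactor A i 0)"
    using laplace_expansion_column[OF assms] by simp
  also have "\<dots> = A $$ (0,0) * A $$ (1,1) - A $$ (0,1) * A $$ (1,0)"
    using assms by (simp add: numeral_2_eq_2 cofactor_def det_single mat_delete_def)
  finally show ?thesis .
qed

lemma index_mult_mat_vec_2:
  assumes "(A :: 'a::semiring_0 mat) \<in> carrier_mat 2 2" and "v \<in> carrier_vec 2"
  shows "(A *\<^sub>v v) $ 0 = A $$ (0,0) * v $ 0 + A $$ (0,1) * v $ 1"
    and "(A *\<^sub>v v) $ 1 = A $$ (1,0) * v $ 0 + A $$ (1,1) * v $ 1"
  using assms by (simp_all add: scalar_prod_def numeral_2_eq_2)

section \<open>Contents of vectors and matrices over formal power series\<close>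

lemma fps_X_dvd_iff: "fps_X dvd (f :: 'a::field fps) \<longleftrightarrow> fps_nth f 0 = 0"
proof (cases "f = 0")
  case False
  then have "fps_X dvd f \<longleftrightarrow> subdegree f \<noteq> 0"
    by (simp add: fps_dvd_iff Suc_le_eq)
  also have "\<dots> \<longleftrightarrow> fps_nth f 0 = 0"
    using False subdegree_eq_0_iff[of f] by auto
  finally show ?thesis .
qed simp

lemma le_subdegree_Gcd_iff:
  fixes S :: "'a::field fps set"
  assumes "\<not> S \<subseteq> {0}"
  shows "e \<le> subdegree (Gcd S) \<longleftrightarrow> (\<forall>x\<in>S. fps_X ^ e dvd x)"
proof -
  have "Gcd S \<noteq> 0" using assms by simp
  then have "e \<le> subdegree (Gcd S) \<longleftrightarrow> fps_X ^ e dvd Gcd S"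
    by (simp add: fps_dvd_iff)
  then show ?thesis by (simp add: dvd_Gcd_iff)
qed

definition content_val :: "'a::field fps vec \<Rightarrow> nat" where
  "content_val v = subdegree (Gcd (set\<^sub>v v))"

lemma vec_set_subset_zero_iff: "set\<^sub>v v \<subseteq> {0} \<longleftrightarrow> v = 0\<^sub>v (dim_vec v)"
proof -
  have "set\<^sub>v v \<subseteq> {0} \<longleftrightarrow> (\<forall>i<dim_vec v. v $ i = 0)"
    unfolding vec_set_def by blast
  also have "\<dots> \<longleftrightarrow> v = 0\<^sub>v (dim_vec v)"
    by (auto simp: vec_eq_iff)
  finally show ?thesis .
qed

lemma le_content_val_iff:
  assumes "v \<noteq> 0\<^sub>v (dim_vec v)"
  shows "e \<le> content_val v \<longleftrightarrow> (\<forall>i<dim_vec v. fps_X ^ e dvd v $ i)"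
  using le_subdegree_Gcd_iff[of "set\<^sub>v v" e] assms
  unfolding content_val_def vec_set_subset_zero_iff by (auto simp: vec_set_def)

lemma content_val_smult:
  fixes c :: "'a::field fps"
  assumes "c \<noteq> 0" and "v \<noteq> 0\<^sub>v (dim_vec v)"
  shows "content_val (c \<cdot>\<^sub>v v) = subdegree c + content_val v"
proof -
  have "set\<^sub>v (c \<cdot>\<^sub>v v) = (\<lambda>x. c * x) ` set\<^sub>v v"
    by (auto simp: vec_set_def)
  moreover have "Gcd (set\<^sub>v v) \<noteq> 0"
    using assms(2) vec_set_subset_zero_iff[of v] by simp
  ultimately show ?thesis
    using assms(1) by (simp add: content_val_def Gcd_mult)
qed

lemma vec_content_factor:
  fixes v :: "'a::field fps vec"
  assumes v: "v \<in> carrier_vec n" and v0: "v \<noteq> 0\<^sub>v n"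
  obtains v' where "v' \<in> carrier_vec n" "v = fps_X ^ content_val v \<cdot>\<^sub>v v'"
proof
  let ?c = "fps_X ^ content_val v"
  have "?c dvd v $ i" if "i < n" for i
    using le_content_val_iff[of v "content_val v"] v v0 that by auto
  then have "v $ i = ?c * (v $ i div ?c)" if "i < n" for i
    using that by (simp only: dvd_mult_div_cancel)
  then show "v = ?c \<cdot>\<^sub>v map_vec (\<lambda>x. x div ?c) v"
    using v by (intro eq_vecI) auto
qed (use v in simp)

definition mat_content_val :: "'a::field fps mat \<Rightarrow> nat" where
  "mat_content_val A = subdegree (Gcd (elements_mat A))"

lemma le_mat_content_val_iff:
  assumes "\<not> elements_mat A \<subseteq> {0}"
  shows "e \<le> mat_content_val A \<longleftrightarrow> (\<forall>x\<in>elements_mat A. fps_X ^ e dvd x)"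
  using le_subdegree_Gcd_iff[OF assms] unfolding mat_content_val_def .

lemma X_power_dvd_mult_mat_vec:
  fixes A :: "'a::field fps mat"
  assumes A: "A \<in> carrier_mat m n" and v: "v \<in> carrier_vec n"
    and dA: "\<forall>x\<in>elements_mat A. fps_X ^ a dvd x" and dv: "\<forall>k<n. fps_X ^ b dvd v $ k"
    and i: "i < m"
  shows "fps_X ^ (a + b) dvd (A *\<^sub>v v) $ i"
proof -
  have "fps_X ^ (a + b) dvd A $$ (i, k) * v $ k" if "k < n" for k
    using dA dv A i that by (auto simp: power_add intro!: mult_dvd_mono elements_matI)
  then show ?thesis
    using A v i by (auto simp: scalar_prod_def intro!: dvd_sum)
qed

lemma mat_content_val_add_le:
  fixes A :: "'a::field fps mat"
  assumes A: "A \<in> carrier_mat m n" and v: "v \<in> carrier_vec n" and Av: "A *\<^sub>v v \<noteq> 0\<^sub>v m"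
  shows "mat_content_val A + content_val v \<le> content_val (A *\<^sub>v v)"
proof -
  have v0: "v \<noteq> 0\<^sub>v n" using A Av mult_mat_vec_zero by blast
  have A0: "\<not> elements_mat A \<subseteq> {0}"
  proof
    assume "elements_mat A \<subseteq> {0}"
    then have "A = 0\<^sub>m m n" using A by (auto intro!: eq_matI elements_matI)
    then show False using Av v by (auto simp: vec_eq_iff scalar_prod_def)
  qed
  have "\<forall>x\<in>elements_mat A. fps_X ^ mat_content_val A dvd x"
    using le_mat_content_val_iff[OF A0] by blast
  moreover have "\<forall>k<n. fps_X ^ content_val v dvd v $ k"
    using le_content_val_iff[of v "content_val v"] v v0 by auto
  ultimately have "\<forall>i<m. fps_X ^ (mat_content_val A + content_val v) dvd (A *\<^sub>v v) $ i"
    using X_power_dvd_mult_mat_vec[OF A v] by blast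
  then show ?thesis
    using le_content_val_iff[of "A *\<^sub>v v"] A Av by auto
qed

lemma content_val_le_mult_mat_vec:
  fixes A :: "'a::field fps mat"
  assumes "A \<in> carrier_mat m n" and "v \<in> carrier_vec n" and "A *\<^sub>v v \<noteq> 0\<^sub>v m"
  shows "content_val v \<le> content_val (A *\<^sub>v v)"
  using mat_content_val_add_le[OF assms] by simp

lemma content_val_mult_mat_vec_le:
  fixes A :: "'a::field fps mat"
  assumes A: "A \<in> carrier_mat n n" and dA: "det A \<noteq> 0"
    and v: "v \<in> carrier_vec n" and v0: "v \<noteq> 0\<^sub>v n"
  shows "content_val (A *\<^sub>v v) \<le> content_val v + subdegree (det A)"
proof -
  have "det A \<cdot>\<^sub>v v \<noteq> 0\<^sub>v n"
    using dA v v0 by (simp add: smult_vec_eq_zero_iff)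
  then have "content_val (A *\<^sub>v v) \<le> content_val (det A \<cdot>\<^sub>v v)"
    using content_val_le_mult_mat_vec[OF adj_mat(1)[OF A] mult_mat_vec_carrier[OF A v]]
      adj_mat_mult_mat_vec[OF A v] by simp
  also have "\<dots> = subdegree (det A) + content_val v"
    using content_val_smult[OF dA, of v] v v0 by simp
  finally show ?thesis by simp
qed

lemma det_X_factor:
  fixes A B :: "'a::field fps mat"
  assumes A: "A \<in> carrier_mat n n" and B: "B \<in> carrier_mat n n"
    and AB: "A * B = fps_X \<cdot>\<^sub>m 1\<^sub>m n"
  shows "det A \<noteq> 0" and "subdegree (det A) + subdegree (det B) = n"
proof -
  have dAB: "det A * det B = fps_X ^ n"
    using det_mult[OF A B, symmetric] AB by simp
  then show "det A \<noteq> 0" by auto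
  from dAB show "subdegree (det A) + subdegree (det B) = n"
    by (metis mult_eq_0_iff subdegree_mult fps_X_power_subdegree power_eq_0_iff fps_X_neq_zero) 
qed

lemma content_val_mult_X_factor:
  fixes A B :: "'a::field fps mat"
  assumes A: "A \<in> carrier_mat n n" and B: "B \<in> carrier_mat n n"
    and AB: "A * B = fps_X \<cdot>\<^sub>m 1\<^sub>m n" and BA: "B * A = fps_X \<cdot>\<^sub>m 1\<^sub>m n"
    and v: "v \<in> carrier_vec n" and v0: "v \<noteq> 0\<^sub>v n"
  shows "content_val v \<le> content_val (A *\<^sub>v v)"
    and "content_val (A *\<^sub>v v) \<le> content_val v + 1"
    and "content_val (A *\<^sub>v v) \<le> content_val v + subdegree (det A)"
    and "content_val v + subdegree (det A) + 1 \<le> content_val (A *\<^sub>v v) + n"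
proof -
  have dA: "det A \<noteq> 0" and dB: "det B \<noteq> 0" and sd: "subdegree (det A) + subdegree (det B) = n"
    using det_X_factor[OF A B AB] det_X_factor[OF B A BA] by auto
  have Av: "A *\<^sub>v v \<in> carrier_vec n" and Av0: "A *\<^sub>v v \<noteq> 0\<^sub>v n"
    using mult_mat_vec_neq_zero[OF A dA v v0] A v by auto
  have BAv: "B *\<^sub>v (A *\<^sub>v v) = fps_X \<cdot>\<^sub>v v"
    using BA A B v smult_mat_mult_mat_vec[OF one_carrier_mat v]
    by (simp add: assoc_mult_mat_vec[symmetric])
  have tv: "content_val (fps_X \<cdot>\<^sub>v v) = content_val v + 1"
    using content_val_smult[of fps_X v] v v0 by simp
  show "content_val v \<le> content_val (A *\<^sub>v v)"
    using content_val_le_mult_mat_vec[OF A v Av0] .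
  show "content_val (A *\<^sub>v v) \<le> content_val v + 1"
    using content_val_le_mult_mat_vec[OF B Av] BAv tv v v0
    by (simp add: smult_vec_eq_zero_iff)
  show "content_val (A *\<^sub>v v) \<le> content_val v + subdegree (det A)"
    using content_val_mult_mat_vec_le[OF A dA v v0] .
  \<comment> \<open>the adjugate bound for B at A v, as B (A v) = t v and val det B = n - val det A\<close>
  show "content_val v + subdegree (det A) + 1 \<le> content_val (A *\<^sub>v v) + n"
    using content_val_mult_mat_vec_le[OF B dB Av Av0] BAv tv sd by simp
qed

definition primitive :: "'a::zero fps vec \<Rightarrow> bool" where
  "primitive v \<longleftrightarrow> (\<exists>i<dim_vec v. fps_nth (v $ i) 0 \<noteq> 0)"

lemma primitive_iff_content_val:
  fixes v :: "'a::field fps vec"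
  shows "primitive v \<longleftrightarrow> v \<noteq> 0\<^sub>v (dim_vec v) \<and> content_val v = 0"
proof (cases "v = 0\<^sub>v (dim_vec v)")
  case False
  then show ?thesis
    using le_content_val_iff[OF False, of 1] by (auto simp: primitive_def fps_X_dvd_iff)
next
  case True
  then have "v $ i = 0" if "i < dim_vec v" for i
    using that by (metis index_zero_vec(1))
  then show ?thesis
    using True by (auto simp: primitive_def)
qed

section \<open>Vectors of length two\<close>

definition vec2 :: "'a::zero \<Rightarrow> 'a \<Rightarrow> 'a vec" where
  "vec2 a b = vec 2 (\<lambda>i. if i = 0 then a else b)"

lemma vec2_carrier [simp]: "vec2 a b \<in> carrier_vec 2"
  and vec2_index [simp]: "vec2 a b $ 0 = a" "vec2 a b $ 1 = b" "vec2 a b $ Suc 0 = b"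
  by (simp_all add: vec2_def)

lemma vec2_dim [simp]: "dim_vec (vec2 a b) = 2"
  by (simp add: vec2_def)

lemma smult_vec2 [simp]: "c \<cdot>\<^sub>v vec2 a b = vec2 (c * a) (c * b)"
  by (intro eq_vecI) (auto simp: vec2_def)

lemma mult_mat_vec_vec2:
  "A \<in> carrier_mat 2 2 \<Longrightarrow>
    A *\<^sub>v vec2 a b = vec2 (A $$ (0,0) * a + A $$ (0,1) * b) (A $$ (1,0) * a + A $$ (1,1) * b)"
  using index_mult_mat_vec_2[of A "vec2 a b"] by (intro eq_vecI) (auto simp: less_2_cases_iff)

definition det2 :: "'a::comm_ring_1 vec \<Rightarrow> 'a vec \<Rightarrow> 'a" where
  "det2 v w = v $ 0 * w $ 1 - v $ 1 * w $ 0"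

lemma det2_self [simp]: "det2 v v = 0"
  by (simp add: det2_def mult.commute)

lemma det2_swap: "det2 w v = - det2 v w"
  by (simp add: det2_def algebra_simps)

lemma det2_smult_left [simp]: "v \<in> carrier_vec 2 \<Longrightarrow> det2 (c \<cdot>\<^sub>v v) w = c * det2 v w"
  and det2_smult_right [simp]: "w \<in> carrier_vec 2 \<Longrightarrow> det2 v (c \<cdot>\<^sub>v w) = c * det2 v w"
  by (simp_all add: det2_def algebra_simps)

lemma det2_mult_mat_vec:
  assumes A: "A \<in> carrier_mat 2 2" and v: "v \<in> carrier_vec 2" and w: "w \<in> carrier_vec 2"
  shows "det2 (A *\<^sub>v v) (A *\<^sub>v w) = det A * det2 v w"
  unfolding det2_def det_2[OF A] index_mult_mat_vec_2[OF A v] index_mult_mat_vec_2[OF A w]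
  by (simp add: algebra_simps)

lemma det2_col: "P \<in> carrier_mat 2 2 \<Longrightarrow> det2 (col P 0) (col P 1) = det P"
  by (simp add: det2_def det_2)

lemma det2_expansion:
  assumes "p \<in> carrier_vec 2" and "q \<in> carrier_vec 2" and "v \<in> carrier_vec 2"
  shows "det2 p q \<cdot>\<^sub>v v = det2 v q \<cdot>\<^sub>v p + det2 p v \<cdot>\<^sub>v q"
  using assms by (intro eq_vecI) (auto simp: det2_def less_2_cases_iff algebra_simps)

lemma det2_unit_expansion:
  assumes p: "p \<in> carrier_vec 2" and q: "q \<in> carrier_vec 2" and v: "v \<in> carrier_vec 2"
    and inv: "\<delta> * det2 p q = 1"
  shows "v = (\<delta> * det2 v q) \<cdot>\<^sub>v p + (\<delta> * det2 p v) \<cdot>\<^sub>v q"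
proof -
  have "v = \<delta> \<cdot>\<^sub>v (det2 p q \<cdot>\<^sub>v v)"
    using inv by (simp add: smult_smult_assoc)
  also have "\<dots> = (\<delta> * det2 v q) \<cdot>\<^sub>v p + (\<delta> * det2 p v) \<cdot>\<^sub>v q"
    using det2_expansion[OF p q v] p q by (simp add: smult_add_distrib_vec smult_smult_assoc)
  finally show ?thesis .
qed

lemma content_val_add_le_subdegree_det2:
  fixes p q :: "'a::field fps vec"
  assumes p: "p \<in> carrier_vec 2" and q: "q \<in> carrier_vec 2" and d: "det2 p q \<noteq> 0"
  shows "content_val p + content_val q \<le> subdegree (det2 p q)"
proof -
  have "p \<noteq> 0\<^sub>v 2" "q \<noteq> 0\<^sub>v 2" using d by (auto simp: det2_def)
  then have "fps_X ^ content_val p dvd p $ i" "fps_X ^ content_val q dvd q $ i" if "i < 2" for i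
    using le_content_val_iff[of p "content_val p"] le_content_val_iff[of q "content_val q"] p q that
    by auto
  then have "fps_X ^ (content_val p + content_val q) dvd det2 p q"
    unfolding det2_def power_add by (intro dvd_diff mult_dvd_mono) auto
  then show ?thesis
    using d by (simp add: fps_dvd_iff fps_X_power_subdegree)
qed

lemma content_val_vec2_zero:
  fixes f :: "'a::field fps"
  shows "content_val (vec2 0 f) = subdegree f" and "content_val (vec2 f 0) = subdegree f"
proof -
  have "set\<^sub>v (vec2 0 f) = {0, f}" "set\<^sub>v (vec2 f 0) = {f, 0}"
    by (auto simp: vec_set_def vec2_def lessThan_nat_numeral)
  then show "content_val (vec2 0 f) = subdegree f" "content_val (vec2 f 0) = subdegree f"
    by (simp_all add: content_val_def)
qed

lemma primitive_vec2_1_0: "primitive (vec2 1 0 :: 'a::zero_neq_one fps vec)"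
  unfolding primitive_def by (rule exI[of _ 0]) simp

lemma exists_unit_det2:
  assumes u: "u \<in> carrier_vec 2" and "primitive u"
  obtains w where "w \<in> carrier_vec 2" "is_unit (det2 u w)"
proof (cases "fps_nth (u $ 0) 0 = 0")
  case True
  then have "fps_nth (u $ 1) 0 \<noteq> 0"
    using assms by (auto simp: primitive_def less_2_cases_iff)
  then show ?thesis
    using that[of "vec2 1 0"] by (simp add: det2_def fps_is_unit_iff)
next
  case False
  then show ?thesis
    using that[of "vec2 0 1"] by (simp add: det2_def fps_is_unit_iff)
qed

(* For p <> 0 this is the saturation of the line Z p: the vectors proportional to p over the
   fraction field. *)
definition saturated_line :: "'a::comm_ring_1 vec \<Rightarrow> 'a vec set" where
  "saturated_line p = {v \<in> carrier_vec 2. det2 v p = 0}"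

lemma submod_saturated_line: "submod 2 (saturated_line p)"
  unfolding submod_def saturated_line_def by (auto simp: det2_def distrib_right)

lemma saturated_line_inter:
  fixes p q :: "'a::idom vec"
  assumes p: "p \<in> carrier_vec 2" and q: "q \<in> carrier_vec 2" and d: "det2 p q \<noteq> 0"
  shows "saturated_line p \<inter> saturated_line q = {0\<^sub>v 2}"
proof -
  have "x = 0\<^sub>v 2" if "x \<in> saturated_line p" "x \<in> saturated_line q" for x
  proof -
    have x: "x \<in> carrier_vec 2" "det2 x p = 0" "det2 p x = 0" "det2 x q = 0"
      using that det2_swap[of p x] by (auto simp: saturated_line_def)
    then have "det2 p q \<cdot>\<^sub>v x = 0\<^sub>v 2"
      using det2_expansion[OF p q x(1)] p q by (simp add: vec_eq_iff)
    then show ?thesis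
      using d x(1) by (simp add: smult_vec_eq_zero_iff)
  qed
  moreover have "0\<^sub>v 2 \<in> saturated_line p \<inter> saturated_line q"
    by (simp add: saturated_line_def det2_def)
  ultimately show ?thesis by blast
qed

lemma mult_mat_vec_in_saturated_line:
  fixes A :: "'a::idom mat"
  assumes A: "A \<in> carrier_mat 2 2" and p: "p \<in> carrier_vec 2" and q: "q \<in> carrier_vec 2"
    and Ap: "c \<cdot>\<^sub>v (A *\<^sub>v p) = c' \<cdot>\<^sub>v q" and c': "c' \<noteq> 0"
    and v: "v \<in> saturated_line p"
  shows "A *\<^sub>v v \<in> saturated_line q"
proof -
  have v2: "v \<in> carrier_vec 2" and vp: "det2 v p = 0"
    using v by (auto simp: saturated_line_def)
  have "c' * det2 (A *\<^sub>v v) q = det2 (A *\<^sub>v v) (c \<cdot>\<^sub>v (A *\<^sub>v p))"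
    using Ap q by simp
  also have "\<dots> = c * (det A * det2 v p)"
    using det2_mult_mat_vec[OF A v2 p] A p by simp
  finally have "det2 (A *\<^sub>v v) q = 0"
    using vp c' by simp
  then show ?thesis
    using A v2 by (simp add: saturated_line_def)
qed

lemma ex1_decomposition_of_direct_sum:
  assumes N1: "submod r N1" and N2: "submod r N2" and N12: "N1 \<inter> N2 = {0\<^sub>v r}"
    and x: "x \<in> N1" and y: "y \<in> N2"
  shows "\<exists>!xy. fst xy \<in> N1 \<and> snd xy \<in> N2 \<and> x + y = fst xy + snd xy"
proof (rule ex1I[of _ "(x, y)"])
  fix xy assume xy: "fst xy \<in> N1 \<and> snd xy \<in> N2 \<and> x + y = fst xy + snd xy"
  have car: "x \<in> carrier_vec r" "y \<in> carrier_vec r"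
    "fst xy \<in> carrier_vec r" "snd xy \<in> carrier_vec r"
    using N1 N2 x y xy by (auto simp: submod_def)
  have "x + (-1) \<cdot>\<^sub>v fst xy \<in> N1" "snd xy + (-1) \<cdot>\<^sub>v y \<in> N2"
    using N1 N2 x y xy by (auto simp: submod_def)
  moreover have sum: "x $ i + y $ i = fst xy $ i + snd xy $ i" if "i < r" for i
    using xy car that by (metis index_add_vec(1) carrier_vecD)
  then have "x + (-1) \<cdot>\<^sub>v fst xy = snd xy + (-1) \<cdot>\<^sub>v y"
    using car by (intro eq_vecI) (auto simp: algebra_simps)
  ultimately have "x + (-1) \<cdot>\<^sub>v fst xy = 0\<^sub>v r"
    using N12 by auto
  then have "fst xy = x" "snd xy = y"
    using car sum by (auto simp: vec_eq_iff)
  then show "xy = (x, y)"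
    by (simp add: prod_eq_iff)
qed (use x y in simp)

lemma saturated_lines_span:
  fixes p q :: "'a::field fps vec"
  assumes p: "p \<in> carrier_vec 2" and q: "q \<in> carrier_vec 2" and d: "det2 p q \<noteq> 0"
    and sd: "subdegree (det2 p q) \<le> content_val p + content_val q"
    and v: "v \<in> carrier_vec 2"
  obtains x y where "x \<in> saturated_line p" "y \<in> saturated_line q" "v = x + y"
proof -
  define a b where "a = content_val p" and "b = content_val q"
  have "p \<noteq> 0\<^sub>v 2" "q \<noteq> 0\<^sub>v 2" using d by (auto simp: det2_def)
  then obtain p' q' where p': "p' \<in> carrier_vec 2" "p = fps_X ^ a \<cdot>\<^sub>v p'"
    and q': "q' \<in> carrier_vec 2" "q = fps_X ^ b \<cdot>\<^sub>v q'"
    using vec_content_factor p q unfolding a_def b_def by metis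
  have dpq: "det2 p q = fps_X ^ (a + b) * det2 p' q'"
    using p' q' by (simp add: power_add ac_simps)
  then have "subdegree (det2 p' q') = 0"
    using d sd by (simp add: fps_X_power_subdegree a_def b_def)
  then have "fps_nth (det2 p' q') 0 \<noteq> 0"
    using d dpq by (simp add: subdegree_eq_0_iff)
  then have \<delta>: "inverse (det2 p' q') * det2 p' q' = 1"
    by (rule inverse_mult_eq_1)
  define x y where "x = (inverse (det2 p' q') * det2 v q') \<cdot>\<^sub>v p'"
    and "y = (inverse (det2 p' q') * det2 p' v) \<cdot>\<^sub>v q'"
  have "x \<in> saturated_line p" "y \<in> saturated_line q"
    using p' q' by (simp_all add: saturated_line_def x_def y_def)
  moreover have "v = x + y"
    using det2_unit_expansion[OF p'(1) q'(1) v \<delta>] by (simp add: x_def y_def)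
  ultimately show ?thesis using that by blast
qed

section \<open>The content of a $2 \times 2$ matrix\<close>

lemma col_neq_zero_of_det:
  assumes P: "P \<in> carrier_mat 2 2" and d: "det P \<noteq> 0" and j: "j < 2"
  shows "col P j \<noteq> 0\<^sub>v 2"
  using d det2_col[OF P] j by (auto simp: det2_def less_2_cases_iff)

lemma elements_mat_not_zero_of_det:
  assumes P: "P \<in> carrier_mat 2 2" and d: "det P \<noteq> 0"
  shows "\<not> elements_mat P \<subseteq> {0}"
proof
  assume "elements_mat P \<subseteq> {0}"
  moreover have "P $$ (0, 0) \<in> elements_mat P" "P $$ (0, 1) \<in> elements_mat P"
    using P by (auto intro!: elements_matI)
  ultimately have "P $$ (0, 0) = 0" "P $$ (0, 1) = 0"
    by blast+
  then show False
    using d by (simp add: det_2[OF P])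
qed

lemma mat_content_val_eq_min_col:
  fixes P :: "'a::field fps mat"
  assumes P: "P \<in> carrier_mat 2 2" and d: "det P \<noteq> 0"
  shows "mat_content_val P = min (content_val (col P 0)) (content_val (col P 1))"
proof -
  have c: "col P 0 \<noteq> 0\<^sub>v (dim_vec (col P 0))" "col P 1 \<noteq> 0\<^sub>v (dim_vec (col P 1))"
    using col_neq_zero_of_det[OF P d] P by auto
  have P0: "\<not> elements_mat P \<subseteq> {0}"
    using elements_mat_not_zero_of_det[OF P d] .
  have "e \<le> mat_content_val P \<longleftrightarrow> e \<le> min (content_val (col P 0)) (content_val (col P 1))" for e
  proof -
    have "e \<le> mat_content_val P \<longleftrightarrow> (\<forall>i<2. \<forall>j<2. fps_X ^ e dvd P $$ (i, j))"
      unfolding le_mat_content_val_iff[OF P0] using P by (auto simp: elements_mat_def)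
    also have "\<dots> \<longleftrightarrow> e \<le> min (content_val (col P 0)) (content_val (col P 1))"
      unfolding min.bounded_iff le_content_val_iff[OF c(1)] le_content_val_iff[OF c(2)]
      using P by (auto simp: less_2_cases_iff)
    finally show ?thesis .
  qed
  then show ?thesis
    by (meson le_antisym order_refl)
qed

lemma double_mat_content_val_le:
  fixes P :: "'a::field fps mat"
  assumes P: "P \<in> carrier_mat 2 2" and d: "det P \<noteq> 0"
  shows "2 * mat_content_val P \<le> subdegree (det P)"
proof -
  have "col P 0 \<in> carrier_vec 2" "col P 1 \<in> carrier_vec 2"
    using col_carrier_vec[of 0 2 P 2] col_carrier_vec[of 1 2 P 2] P by simp_all
  then show ?thesis
    using content_val_add_le_subdegree_det2[of "col P 0" "col P 1"]
      mat_content_val_eq_min_col[OF P d] det2_col[OF P] d by simp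
qed

lemma mat_content_factor:
  fixes P :: "'a::field fps mat"
  assumes P: "P \<in> carrier_mat m n" and P0: "\<not> elements_mat P \<subseteq> {0}"
  obtains Q i j where "Q \<in> carrier_mat m n" "P = fps_X ^ mat_content_val P \<cdot>\<^sub>m Q"
    "i < m" "j < n" "fps_nth (Q $$ (i, j)) 0 \<noteq> 0"
proof -
  define E where "E = mat_content_val P"
  define Q where "Q = map_mat (\<lambda>x. x div fps_X ^ E) P"
  have "\<forall>x\<in>elements_mat P. fps_X ^ E dvd x"
    using le_mat_content_val_iff[OF P0, of E] by (simp add: E_def)
  then have "P $$ (i, j) = fps_X ^ E * (P $$ (i, j) div fps_X ^ E)" if "i < m" "j < n" for i j
    using P that by (simp only: dvd_mult_div_cancel elements_matI)
  then have PQ: "P = fps_X ^ E \<cdot>\<^sub>m Q" and Q: "Q \<in> carrier_mat m n"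
    using P by (auto simp: Q_def intro!: eq_matI)
  have "\<not> (\<forall>x\<in>elements_mat P. fps_X ^ Suc E dvd x)"
    using le_mat_content_val_iff[OF P0, of "Suc E"] by (simp add: E_def)
  then obtain i j where ij: "i < m" "j < n" "\<not> fps_X ^ Suc E dvd P $$ (i, j)"
    using P by (auto simp: elements_mat_def)
  have "fps_nth (Q $$ (i, j)) 0 \<noteq> 0"
  proof
    assume "fps_nth (Q $$ (i, j)) 0 = 0"
    then have "fps_X ^ Suc E dvd fps_X ^ E * Q $$ (i, j)"
      by (simp add: fps_X_dvd_iff mult_dvd_mono)
    then show False
      using ij PQ Q by simp
  qed
  then show ?thesis
    using that[of Q i j] Q PQ ij unfolding E_def by blast
qed

lemma exists_primitive_max_content:
  fixes P :: "'a::field fps mat"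
  assumes P: "P \<in> carrier_mat 2 2" and d: "det P \<noteq> 0"
  obtains u where "u \<in> carrier_vec 2" "primitive u"
    "subdegree (det P) \<le> content_val (P *\<^sub>v u) + mat_content_val P"
proof -
  define E where "E = mat_content_val P"
  obtain Q i j where Q: "Q \<in> carrier_mat 2 2" and PQ: "P = fps_X ^ E \<cdot>\<^sub>m Q"
    and ij: "i < 2" "j < 2" "fps_nth (Q $$ (i, j)) 0 \<noteq> 0"
    using mat_content_factor[OF P elements_mat_not_zero_of_det[OF P d]] by (metis E_def)
  have dQ: "det P = fps_X ^ (2 * E) * det Q" "det Q \<noteq> 0"
    using d Q by (simp_all add: PQ power_mult mult.commute)
  \<comment> \<open>u is a row of Q containing a unit, rotated so that Q u = (0, det Q) or (det Q, 0)\<close>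
  obtain u where u: "u \<in> carrier_vec 2" "primitive u"
    "Q *\<^sub>v u = vec2 0 (det Q) \<or> Q *\<^sub>v u = vec2 (det Q) 0"
  proof (cases "i = 0")
    case True
    define u where "u = vec2 (- Q $$ (0, 1)) (Q $$ (0, 0))"
    have "Q *\<^sub>v u = vec2 0 (det Q)"
      by (simp add: u_def det_2[OF Q] mult_mat_vec_vec2[OF Q] algebra_simps)
    moreover have "primitive u"
      using ij True by (auto simp: primitive_def u_def less_2_cases_iff)
    ultimately show ?thesis
      using that[of u] by (simp add: u_def)
  next
    case False
    define u where "u = vec2 (Q $$ (1, 1)) (- Q $$ (1, 0))"
    have "Q *\<^sub>v u = vec2 (det Q) 0"
      by (simp add: u_def det_2[OF Q] mult_mat_vec_vec2[OF Q] algebra_simps)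
    moreover have "primitive u"
      using ij False by (auto simp: primitive_def u_def less_2_cases_iff)
    ultimately show ?thesis
      using that[of u] by (simp add: u_def)
  qed
  moreover have "P *\<^sub>v u = fps_X ^ E \<cdot>\<^sub>v (Q *\<^sub>v u)"
    using PQ Q u(1) by (simp add: smult_mat_mult_mat_vec)
  ultimately have "content_val (P *\<^sub>v u) = E + subdegree (det Q)"
    using dQ by (auto simp: content_val_vec2_zero fps_X_power_subdegree)
  then show ?thesis
    using that u dQ by (auto simp: E_def fps_X_power_subdegree)
qed

lemma is_unit_det2_of_content_val:
  fixes P :: "'a::field fps mat"
  assumes P: "P \<in> carrier_mat 2 2" and d: "det P \<noteq> 0"
    and u: "u \<in> carrier_vec 2" "u \<noteq> 0\<^sub>v 2" and w: "w \<in> carrier_vec 2" "primitive w"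
    and Pw: "mat_content_val P < content_val (P *\<^sub>v w)"
    and Pu: "content_val (P *\<^sub>v u) \<le> mat_content_val P"
  shows "is_unit (det2 u w)"
proof (rule ccontr)
  assume "\<not> is_unit (det2 u w)"
  then have X_dvd: "fps_X dvd det2 w u"
    by (simp add: fps_is_unit_iff fps_X_dvd_iff det2_swap[of w u])
  define E where "E = mat_content_val P"
  obtain w' where w': "w' \<in> carrier_vec 2" "is_unit (det2 w w')"
    using exists_unit_det2[OF w] .
  define \<delta> where "\<delta> = inverse (det2 w w')"
  have "\<delta> * det2 w w' = 1"
    using w'(2) by (simp add: \<delta>_def fps_is_unit_iff inverse_mult_eq_1)
  then have "u = (\<delta> * det2 u w') \<cdot>\<^sub>v w + (\<delta> * det2 w u) \<cdot>\<^sub>v w'"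
    using det2_unit_expansion[OF w(1) w'(1) u(1)] by simp
  then have "P *\<^sub>v u = P *\<^sub>v ((\<delta> * det2 u w') \<cdot>\<^sub>v w + (\<delta> * det2 w u) \<cdot>\<^sub>v w')"
    by (rule arg_cong)
  also have "\<dots> = (\<delta> * det2 u w') \<cdot>\<^sub>v (P *\<^sub>v w) + (\<delta> * det2 w u) \<cdot>\<^sub>v (P *\<^sub>v w')"
    using P w w' by (simp add: mult_add_distrib_mat_vec mult_mat_vec_smult)
  finally have Pu_eq: "P *\<^sub>v u = (\<delta> * det2 u w') \<cdot>\<^sub>v (P *\<^sub>v w) + (\<delta> * det2 w u) \<cdot>\<^sub>v (P *\<^sub>v w')" .
  have P0: "\<not> elements_mat P \<subseteq> {0}"
    using elements_mat_not_zero_of_det[OF P d] .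
  have Pw0: "P *\<^sub>v w \<noteq> 0\<^sub>v 2" and Pu0: "P *\<^sub>v u \<noteq> 0\<^sub>v 2"
    using mult_mat_vec_neq_zero[OF P d] w u primitive_iff_content_val[of w] by auto
  \<comment> \<open>u is congruent to a multiple of w modulo t, so P u inherits the divisibility of P w\<close>
  have "fps_X ^ Suc E dvd (P *\<^sub>v u) $ i" if i: "i < 2" for i
  proof -
    have "fps_X ^ Suc E dvd (P *\<^sub>v w) $ i"
      using le_content_val_iff[of "P *\<^sub>v w" "Suc E"] Pw Pw0 P i by (auto simp: E_def)
    moreover have "fps_X ^ E dvd (P *\<^sub>v w') $ i"
      using X_power_dvd_mult_mat_vec[OF P w'(1), of E 0] le_mat_content_val_iff[OF P0, of E] i
      by (simp add: E_def)
    then have "fps_X ^ Suc E dvd (\<delta> * det2 w u) * (P *\<^sub>v w') $ i"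
      using X_dvd by (simp add: mult_dvd_mono)
    ultimately show ?thesis
      using P w w' i by (simp add: Pu_eq)
  qed
  then have "Suc E \<le> content_val (P *\<^sub>v u)"
    using le_content_val_iff[of "P *\<^sub>v u" "Suc E"] Pu0 P by auto
  then show False
    using Pu by (simp add: E_def)
qed

section \<open>Downhill sequences\<close>

definition downhill_step :: "(nat \<Rightarrow> int) \<Rightarrow> (nat \<Rightarrow> bool) \<Rightarrow> nat \<Rightarrow> bool" where
  "downhill_step s M j \<longleftrightarrow> \<bar>s (Suc j) - s j\<bar> \<le> 1 \<and>
     (s (Suc j) \<le> s j \<longrightarrow> M j \<longrightarrow> M (Suc j)) \<and> (s j \<le> s (Suc j) \<longrightarrow> M (Suc j) \<longrightarrow> M j)"

context
  fixes s :: "nat \<Rightarrow> int" and M :: "nat \<Rightarrow> bool" and n :: nat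
  assumes steps: "\<And>j. j < n \<Longrightarrow> downhill_step s M j"
begin

lemma downhill_lipschitz:
  assumes "a \<le> b" "b \<le> n"
  shows "\<bar>s b - s a\<bar> \<le> int (b - a)"
  using assms
proof (induction b rule: dec_induct)
  case (step m)
  then have "\<bar>s (Suc m) - s m\<bar> \<le> 1"
    using steps[of m] by (simp add: downhill_step_def)
  with step show ?case by auto
qed simp

lemma downhill_propagate_right:
  assumes "i \<le> j" "j \<le> n" "M i" and down: "\<And>l. i \<le> l \<Longrightarrow> l < j \<Longrightarrow> s (Suc l) \<le> s l"
  shows "M j"
  using assms(1,2)
proof (induction j rule: dec_induct)
  case (step m)
  then show ?case
    using steps[of m] down[of m] by (simp add: downhill_step_def)
qed (rule assms(3))

lemma downhill_propagate_left:
  assumes "j \<le> i" "i \<le> n" "M i" and up: "\<And>l. j \<le> l \<Longrightarrow> l < i \<Longrightarrow> s l \<le> s (Suc l)"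
  shows "M j"
  using assms(1)
proof (induction j rule: inc_induct)
  case (step m)
  then show ?case
    using steps[of m] up[of m] assms(2) by (simp add: downhill_step_def)
qed (rule assms(3))

lemma downhill_plateau:
  assumes "a \<le> n" "b \<le> n" and const: "\<And>l. min a b \<le> l \<Longrightarrow> l \<le> max a b \<Longrightarrow> s l = c"
  shows "M a \<longleftrightarrow> M b"
proof -
  have "M y" if "x \<le> n" "y \<le> n" "M x" "\<And>l. min x y \<le> l \<Longrightarrow> l \<le> max x y \<Longrightarrow> s l = c" for x y
  proof (cases "x \<le> y")
    case True
    then show ?thesis
      using downhill_propagate_right[of x y] that by simp
  next
    case False
    then show ?thesis
      using downhill_propagate_left[of y x] that by simp
  qed
  then show ?thesis
    using assms by (metis min.commute max.commute)
qed

lemma short_downhill_le_2: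
  assumes "n \<le> 5" "s 0 = 0" "s n = 0" "j \<le> n"
  shows "s j \<le> 2"
  using downhill_lipschitz[of 0 j] downhill_lipschitz[of j n] assms by auto

lemma short_downhill_peak:
  assumes n5: "n \<le> 5" and s0: "s 0 = 0" and sn: "s n = 0"
    and i: "i \<le> n" "s i = 2" "M i" and j: "j \<le> n"
  shows "M j"
proof (cases "i \<le> j")
  case True
  have "s (Suc l) \<le> s l" if "i \<le> l" "l < j" for l
    using downhill_lipschitz[of 0 i] downhill_lipschitz[of i l] downhill_lipschitz[of "Suc l" n]
      steps[of l] that i j n5 s0 sn by (auto simp: downhill_step_def)
  then show ?thesis
    using downhill_propagate_right[OF True j i(3)] by blast
next
  case False
  have "s l \<le> s (Suc l)" if "j \<le> l" "l < i" for l
    using downhill_lipschitz[of 0 l] downhill_lipschitz[of "Suc l" i] downhill_lipschitz[of i n]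
      steps[of l] that i n5 s0 sn by (auto simp: downhill_step_def)
  then show ?thesis
    using downhill_propagate_left[of j i] False i by simp
qed

end

lemma short_downhill_two_plateaus:
  fixes s :: "nat \<Rightarrow> int"
  assumes n5: "n \<le> 5" and s0: "s 0 = 0"
    and stepsM: "\<And>j. j < n \<Longrightarrow> downhill_step s M j"
    and stepsM': "\<And>j. j < n \<Longrightarrow> downhill_step s M' j"
    and i1: "i1 < n" "s i1 = 1" "M i1"
    and i2: "i2 < n" "s i2 = 1" "\<not> M i2" "M' i2"
    and j: "j < n" "s j = 1"
  shows "M j \<or> M' j"
proof (rule ccontr)
  \<comment> \<open>otherwise i1, i2, j are pairwise separated by points where s is not 1, which needs
    more than the four positions 1, ..., 4\<close>
  assume nj: "\<not> (M j \<or> M' j)"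
  have gap: "\<exists>z. min a b \<le> z \<and> z \<le> max a b \<and> s z \<noteq> 1"
    if "a < n" "b < n" "M'' a \<noteq> M'' b" "\<And>j. j < n \<Longrightarrow> downhill_step s M'' j" for a b M''
    using downhill_plateau[where s=s and M=M'' and n=n and a=a and b=b and c=1] that by force
  obtain z3 where z3: "min i1 i2 \<le> z3" "z3 \<le> max i1 i2" "s z3 \<noteq> 1"
    using gap[OF i1(1) i2(1) _ stepsM] i1 i2 by blast
  obtain z1 where z1: "min i1 j \<le> z1" "z1 \<le> max i1 j" "s z1 \<noteq> 1"
    using gap[OF i1(1) j(1) _ stepsM] i1 nj by blast
  obtain z2 where z2: "min i2 j \<le> z2" "z2 \<le> max i2 j" "s z2 \<noteq> 1"
    using gap[OF i2(1) j(1) _ stepsM'] i2 nj by blast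
  have "i1 \<noteq> 0" "i2 \<noteq> 0" "j \<noteq> 0"
    using s0 i1(2) i2(2) j(2) by (metis zero_neq_one)+
  moreover have "z1 \<noteq> i1" "z1 \<noteq> j" "z2 \<noteq> i2" "z2 \<noteq> j" "z3 \<noteq> i1" "z3 \<noteq> i2"
    using z1 z2 z3 i1 i2 j by auto
  ultimately show False
    using z1(1,2) z2(1,2) z3(1,2) i1(1) i2(1) j(1) n5
    by (simp add: min_def max_def split: if_splits)
qed

section \<open>Chains of factors of X\<close>

locale X_factor_chain =
  fixes n d :: nat and P :: "nat \<Rightarrow> 'a::field fps mat"
  assumes P_0: "P 0 = 1\<^sub>m 2"
    and P_n: "P n = fps_X ^ d \<cdot>\<^sub>m 1\<^sub>m 2"
    and P_Suc: "\<And>j. j < n \<Longrightarrow> \<exists>A B. A \<in> carrier_mat 2 2 \<and> B \<in> carrier_mat 2 2 \<and>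
      A * B = fps_X \<cdot>\<^sub>m 1\<^sub>m 2 \<and> B * A = fps_X \<cdot>\<^sub>m 1\<^sub>m 2 \<and> P (Suc j) = A * P j"
begin

lemma P_carrier_det: "j \<le> n \<Longrightarrow> P j \<in> carrier_mat 2 2 \<and> det (P j) \<noteq> 0"
proof (induction j)
  case (Suc j)
  then obtain A B where AB: "A \<in> carrier_mat 2 2" "B \<in> carrier_mat 2 2" "A * B = fps_X \<cdot>\<^sub>m 1\<^sub>m 2"
    and P_eq: "P (Suc j) = A * P j"
    using P_Suc[of j] by auto
  then show ?case
    using Suc det_X_factor(1)[OF AB] det_mult[OF AB(1)] by simp
qed (simp add: P_0)

definition defect :: "nat \<Rightarrow> int" where
  "defect j = int (subdegree (det (P j))) - 2 * int (mat_content_val (P j))"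

definition max_content :: "'a fps vec \<Rightarrow> nat \<Rightarrow> bool" where
  "max_content v j \<longleftrightarrow> subdegree (det (P j)) \<le> content_val (P j *\<^sub>v v) + mat_content_val (P j)"

lemma downhill_step_defect_max_content:
  assumes j: "j < n" and v: "v \<in> carrier_vec 2" "v \<noteq> 0\<^sub>v 2"
  shows "downhill_step defect (max_content v) j"
proof -
  obtain A B where A: "A \<in> carrier_mat 2 2" and B: "B \<in> carrier_mat 2 2"
    and AB: "A * B = fps_X \<cdot>\<^sub>m 1\<^sub>m 2" "B * A = fps_X \<cdot>\<^sub>m 1\<^sub>m 2" and P_eq: "P (Suc j) = A * P j"
    using P_Suc[OF j] by auto
  have Pj: "P j \<in> carrier_mat 2 2" "det (P j) \<noteq> 0" and PSj: "det (P (Suc j)) \<noteq> 0"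
    using P_carrier_det[of j] P_carrier_det[of "Suc j"] j by auto
  define \<delta> where "\<delta> = subdegree (det A)"
  have dA: "det A \<noteq> 0" "\<delta> \<le> 2"
    using det_X_factor[OF A B AB(1)] by (auto simp: \<delta>_def)
  have D: "subdegree (det (P (Suc j))) = subdegree (det (P j)) + \<delta>"
    using det_mult[OF A Pj(1)] dA Pj by (simp add: P_eq \<delta>_def)
  have bounds: "content_val y \<le> content_val (A *\<^sub>v y) \<and>
      content_val (A *\<^sub>v y) \<le> content_val y + 1 \<and>
      content_val (A *\<^sub>v y) \<le> content_val y + \<delta> \<and>
      content_val y + \<delta> + 1 \<le> content_val (A *\<^sub>v y) + 2"
    if "y \<in> carrier_vec 2" "y \<noteq> 0\<^sub>v 2" for y
    using content_val_mult_X_factor[OF A B AB that] by (simp add: \<delta>_def)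
  have col: "col (P (Suc j)) k = A *\<^sub>v col (P j) k" "col (P j) k \<in> carrier_vec 2"
    "col (P j) k \<noteq> 0\<^sub>v 2" if "k < 2" for k
    using col_mult2[OF A Pj(1) that] col_neq_zero_of_det[OF Pj that] Pj(1) that
    by (simp_all add: P_eq col_carrier_vec)
  have E: "mat_content_val (P j) = min (content_val (col (P j) 0)) (content_val (col (P j) 1))"
    "mat_content_val (P (Suc j)) =
       min (content_val (A *\<^sub>v col (P j) 0)) (content_val (A *\<^sub>v col (P j) 1))"
    using mat_content_val_eq_min_col[OF Pj] mat_content_val_eq_min_col[OF _ PSj]
      P_carrier_det[of "Suc j"] j col by auto
  have Pv: "P (Suc j) *\<^sub>v v = A *\<^sub>v (P j *\<^sub>v v)" "P j *\<^sub>v v \<in> carrier_vec 2" "P j *\<^sub>v v \<noteq> 0\<^sub>v 2"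
    using A Pj v mult_mat_vec_neq_zero[OF Pj(1,2) v] by (simp_all add: P_eq)
  show ?thesis
    unfolding downhill_step_def defect_def max_content_def E D Pv(1)
    using bounds[OF col(2,3)[of 0]] bounds[OF col(2,3)[of 1]] bounds[OF Pv(2,3)] dA(2)
    by (cases "\<delta> = 0"; cases "\<delta> = 1") auto
qed

lemma mat_content_val_le_content_val:
  assumes "j \<le> n" "v \<in> carrier_vec 2" "v \<noteq> 0\<^sub>v 2"
  shows "mat_content_val (P j) \<le> content_val (P j *\<^sub>v v)"
  using mat_content_val_add_le[of "P j" 2 2 v] P_carrier_det[of j]
    mult_mat_vec_neq_zero[of "P j" 2 v] assms
  by simp

lemma defect_nonneg: "j \<le> n \<Longrightarrow> 0 \<le> defect j"
  using double_mat_content_val_le[of "P j"] P_carrier_det[of j] by (simp add: defect_def)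

lemma max_content_of_defect_zero:
  "j \<le> n \<Longrightarrow> defect j = 0 \<Longrightarrow> v \<in> carrier_vec 2 \<Longrightarrow> v \<noteq> 0\<^sub>v 2 \<Longrightarrow> max_content v j"
  using mat_content_val_le_content_val[of j v] by (simp add: defect_def max_content_def)

lemma defect_0: "defect 0 = 0"
  using defect_nonneg[of 0] by (simp add: defect_def P_0)

lemma defect_n: "defect n = 0"
proof -
  have "\<forall>x\<in>elements_mat (P n). fps_X ^ d dvd x"
    by (auto simp: P_n elements_mat_def)
  then have "d \<le> mat_content_val (P n)"
    using le_mat_content_val_iff[OF elements_mat_not_zero_of_det] P_carrier_det[of n] by blast
  moreover have "subdegree (det (P n)) = 2 * d"
    by (simp add: P_n det_smult power_mult_distrib fps_X_power_subdegree flip: power_mult)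
  ultimately show ?thesis
    using defect_nonneg[of n] by (simp add: defect_def)
qed

lemma exists_primitive_max_content_at:
  assumes "j \<le> n"
  obtains u where "u \<in> carrier_vec 2" "primitive u" "max_content u j"
  using exists_primitive_max_content[of "P j"] P_carrier_det[OF assms]
  unfolding max_content_def by blast

lemma subdegree_det_le_of_max_content:
  assumes "i \<le> n" and u: "u \<in> carrier_vec 2" and w: "w \<in> carrier_vec 2"
    and uw: "is_unit (det2 u w)" and max: "max_content u i \<or> max_content w i"
  shows "subdegree (det (P i)) \<le> content_val (P i *\<^sub>v u) + content_val (P i *\<^sub>v w)"
proof -
  have "u \<noteq> 0\<^sub>v 2" "w \<noteq> 0\<^sub>v 2"
    using uw by (auto simp: det2_def)
  then show ?thesis
    using max mat_content_val_le_content_val[of i u] mat_content_val_le_content_val[of i w] assms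
    by (auto simp: max_content_def)
qed

definition splitting_basis :: "'a fps vec \<Rightarrow> 'a fps vec \<Rightarrow> bool" where
  "splitting_basis u w \<longleftrightarrow> u \<in> carrier_vec 2 \<and> w \<in> carrier_vec 2 \<and> is_unit (det2 u w) \<and>
     (\<forall>i<n. max_content u i \<or> max_content w i)"

lemma splitting_basis_of_max_content:
  assumes "u \<in> carrier_vec 2" "primitive u" "\<And>i. i < n \<Longrightarrow> max_content u i"
  shows "\<exists>w. splitting_basis u w"
  using exists_unit_det2[OF assms(1,2)] assms by (metis splitting_basis_def)

lemma downhill_step_max_content_primitive:
  "u \<in> carrier_vec 2 \<Longrightarrow> primitive u \<Longrightarrow> j < n \<Longrightarrow> downhill_step defect (max_content u) j"
  using downhill_step_defect_max_content primitive_iff_content_val[of u] by simp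

lemma exists_splitting_basis_of_peak:
  assumes n5: "n \<le> 5" and i: "i < n" "defect i = 2"
  shows "\<exists>u w. splitting_basis u w"
proof -
  obtain u where u: "u \<in> carrier_vec 2" "primitive u" "max_content u i"
    using exists_primitive_max_content_at[of i] i by auto
  have "max_content u j" if "j < n" for j
    using short_downhill_peak[OF downhill_step_max_content_primitive[OF u(1,2)] n5 defect_0 defect_n,
        of i j] u i that by simp
  then show ?thesis
    using splitting_basis_of_max_content[OF u(1,2)] by blast
qed

lemma exists_splitting_basis_of_plateau:
  assumes n5: "n \<le> 5" and le1: "\<And>i. i < n \<Longrightarrow> defect i \<le> 1" and i1: "i1 < n" "defect i1 = 1"
  shows "\<exists>u w. splitting_basis u w"
proof -
  obtain u where u: "u \<in> carrier_vec 2" "primitive u" "max_content u i1"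
    using exists_primitive_max_content_at[of i1] i1 by auto
  have u0: "u \<noteq> 0\<^sub>v 2"
    using u primitive_iff_content_val[of u] by simp
  show ?thesis
  proof (cases "\<forall>i<n. max_content u i")
    case True
    then show ?thesis using splitting_basis_of_max_content[OF u(1,2)] by blast
  next
    case False
    then obtain i2 where i2: "i2 < n" "\<not> max_content u i2" by blast
    then have i2_1: "defect i2 = 1"
      using le1[OF i2(1)] max_content_of_defect_zero[of i2 u] u u0 defect_nonneg[of i2] by force
    obtain w where w: "w \<in> carrier_vec 2" "primitive w" "max_content w i2"
      using exists_primitive_max_content_at[of i2] i2 by auto
    have "is_unit (det2 u w)"
      using is_unit_det2_of_content_val[of "P i2" u w] P_carrier_det[of i2] i2_1 i2 u u0 w
      by (auto simp: defect_def max_content_def)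
    moreover have "max_content u j \<or> max_content w j" if "j < n" for j
    proof (cases "defect j = 0")
      case True
      then show ?thesis using max_content_of_defect_zero[of j u] u0 u that by simp
    next
      case False
      then have "defect j = 1"
        using le1[OF that] defect_nonneg[of j] that by simp
      then show ?thesis
        using short_downhill_two_plateaus[OF n5 defect_0 downhill_step_max_content_primitive[OF u(1,2)]
            downhill_step_max_content_primitive[OF w(1,2)] i1 u(3)] i2 i2_1 w(3) that
        by simp
    qed
    ultimately show ?thesis
      using u w by (auto simp: splitting_basis_def)
  qed
qed

lemma exists_splitting_basis_of_defect_le_1:
  assumes n5: "n \<le> 5" and le1: "\<And>i. i < n \<Longrightarrow> defect i \<le> 1"
  shows "\<exists>u w. splitting_basis u w"
proof (cases "\<exists>i1<n. defect i1 = 1")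
  case True
  then show ?thesis
    using exists_splitting_basis_of_plateau[OF n5 le1] by blast
next
  case False
  have "max_content (vec2 1 0) i" if "i < n" for i
    using False le1[OF that] defect_nonneg[of i] max_content_of_defect_zero[of i "vec2 1 0"] that
    by (force simp: vec_eq_iff)
  then show ?thesis
    using splitting_basis_of_max_content[of "vec2 1 0"] primitive_vec2_1_0 by auto
qed

lemma exists_splitting_basis:
  assumes "n \<le> 5"
  obtains u w where "u \<in> carrier_vec 2" "w \<in> carrier_vec 2" "is_unit (det2 u w)"
    "\<And>i. i < n \<Longrightarrow> subdegree (det (P i)) \<le> content_val (P i *\<^sub>v u) + content_val (P i *\<^sub>v w)"
proof -
  have "\<exists>u w. splitting_basis u w"
  proof (cases "\<exists>i<n. defect i = 2")
    case True
    then show ?thesis using exists_splitting_basis_of_peak assms by blast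
  next
    case False
    have "defect i \<le> 2" if "i < n" for i
      using short_downhill_le_2[OF downhill_step_max_content_primitive[of "vec2 1 0"] assms defect_0
          defect_n, of i] primitive_vec2_1_0 that by simp
    then show ?thesis
      using exists_splitting_basis_of_defect_le_1[OF assms] False by force
  qed
  then show ?thesis
    using that subdegree_det_le_of_max_content by (auto simp: splitting_basis_def)
qed

end

section \<open>Rank two modules over B_{k,n}\<close>

lemma xpath_carrier:
  assumes "0 < n" and "\<forall>j<n. X j \<in> carrier_mat r r"
  shows "xpath n r X i m \<in> carrier_mat r r"
  using assms by (induction m) (auto intro!: mult_carrier_mat)

lemma ypath_carrier:
  assumes "0 < n" and "\<forall>j<n. Y j \<in> carrier_mat r r"
  shows "ypath n r Y i m \<in> carrier_mat r r"
  using assms by (induction m) (auto intro!: mult_carrier_mat)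

lemma xpath_add:
  assumes n: "0 < n" and X: "\<forall>j<n. X j \<in> carrier_mat r r"
  shows "xpath n r X i (a + b) = xpath n r X ((i + a) mod n) b * xpath n r X i a"
proof (induction b)
  case 0
  then show ?case using left_mult_one_mat[OF xpath_carrier[OF assms]] by simp
next
  case (Suc b)
  have "((i + a) mod n + b + 1) mod n = (i + (a + b) + 1) mod n"
    by (metis add.assoc mod_add_left_eq)
  then show ?case
    using Suc xpath_carrier[OF assms] X n by (simp add: assoc_mult_mat[of _ r r _ r _ r])
qed

(* The vertex i - j modulo n, where ypath n r Y i j ends. *)
definition cyc_minus :: "nat \<Rightarrow> nat \<Rightarrow> nat \<Rightarrow> nat" where
  "cyc_minus n i j = (i + (n - j mod n)) mod n"

lemma cyc_minus_Suc:
  assumes "0 < n"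
  shows "(cyc_minus n i (Suc j) + 1) mod n = cyc_minus n i j"
proof -
  have "(cyc_minus n i (Suc j) + 1) mod n = (i + (n - Suc j mod n) + 1) mod n"
    unfolding cyc_minus_def by (rule mod_add_left_eq)
  also have "\<dots> = (i + (n - j mod n)) mod n"
  proof (cases "Suc (j mod n) = n")
    case True
    then have "i + (n - Suc j mod n) + 1 = (i + (n - j mod n)) + n"
      by (simp add: mod_Suc)
    then show ?thesis
      by (simp only: mod_add_self2)
  next
    case False
    then have "i + (n - Suc j mod n) + 1 = i + (n - j mod n)"
      using assms mod_less_divisor[OF assms, of j] by (simp add: mod_Suc)
    then show ?thesis
      by (simp only:)
  qed
  finally show ?thesis
    by (simp add: cyc_minus_def)
qed

lemma xpath_ypath:
  assumes n: "0 < n" and X: "\<forall>j<n. X j \<in> carrier_mat r r" and Y: "\<forall>j<n. Y j \<in> carrier_mat r r"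
    and XY: "\<forall>j<n. X j * Y j = fps_X \<cdot>\<^sub>m 1\<^sub>m r"
  shows "xpath n r X (cyc_minus n i j) j * ypath n r Y i j = fps_X ^ j \<cdot>\<^sub>m 1\<^sub>m r"
proof (induction j)
  case (Suc j)
  define b where "b = cyc_minus n i j"
  have b: "b < n" "(i + (n - j mod n)) mod n = b"
    using n by (simp_all add: b_def cyc_minus_def)
  have Xb: "X b \<in> carrier_mat r r"
    using X b by simp
  have "xpath n r X (cyc_minus n i (Suc j)) (1 + j) = xpath n r X b j * X b"
    using xpath_add[OF n X, of "cyc_minus n i (Suc j)" 1 j] cyc_minus_Suc[OF n, of i j] Xb
    by (simp add: b_def)
  moreover have "ypath n r Y i (Suc j) = Y b * ypath n r Y i j"
    using b by simp
  moreover have "Y b \<in> carrier_mat r r"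
    "xpath n r X b j \<in> carrier_mat r r" "ypath n r Y i j \<in> carrier_mat r r"
    using Y b xpath_carrier[OF n X] ypath_carrier[OF n Y] by auto
  ultimately have "xpath n r X (cyc_minus n i (Suc j)) (Suc j) * ypath n r Y i (Suc j)
      = xpath n r X b j * ((X b * Y b) * ypath n r Y i j)"
    using Xb by (simp add: assoc_mult_mat[of _ r r _ r _ r])
  also have "\<dots> = fps_X \<cdot>\<^sub>m (xpath n r X b j * ypath n r Y i j)"
    using XY b \<open>xpath n r X b j \<in> carrier_mat r r\<close> \<open>ypath n r Y i j \<in> carrier_mat r r\<close>
    by (simp add: mult_smult_distrib mult_smult_assoc_mat[OF one_carrier_mat])
  also have "\<dots> = fps_X ^ Suc j \<cdot>\<^sub>m 1\<^sub>m r"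
    using Suc by (simp add: b_def)
  finally show ?case .
qed simp

lemma prev_v_less: "0 < n \<Longrightarrow> prev_v n i < n"
  by (simp add: prev_v_def)

lemma Suc_prev_v_mod: "j < n \<Longrightarrow> Suc (prev_v n j) mod n = j"
  by (cases j) (auto simp: prev_v_def mod_Suc_eq)

lemma cm_rep_Y_X:
  assumes "cm_rep k n r X Y" and "j < n"
  shows "Y j * X j = fps_X \<cdot>\<^sub>m 1\<^sub>m r"
  using assms prev_v_less[of n j] Suc_prev_v_mod[OF assms(2)]
  unfolding cm_rep_def by (metis Suc_eq_plus1 gr_zeroI less_nat_zero_code)

lemma cm_rep_xpath_full_cycle:
  assumes cm: "cm_rep k n r X Y" and n: "0 < n" and k: "k \<le> n"
  shows "xpath n r X 0 n = fps_X ^ (n - k) \<cdot>\<^sub>m 1\<^sub>m r"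
proof -
  have X: "\<forall>j<n. X j \<in> carrier_mat r r" and Y: "\<forall>j<n. Y j \<in> carrier_mat r r"
    and XY: "\<forall>j<n. X j * Y j = fps_X \<cdot>\<^sub>m 1\<^sub>m r"
    and x_eq_y: "xpath n r X 0 k = ypath n r Y 0 (n - k)"
    using cm n unfolding cm_rep_def by auto
  have "k mod n = cyc_minus n 0 (n - k)"
    using k by (cases "k = 0") (auto simp: cyc_minus_def)
  then have "xpath n r X 0 n = xpath n r X (cyc_minus n 0 (n - k)) (n - k) * ypath n r Y 0 (n - k)"
    using xpath_add[OF n X, of 0 k "n - k"] k x_eq_y by simp
  also have "\<dots> = fps_X ^ (n - k) \<cdot>\<^sub>m 1\<^sub>m r"
    using xpath_ypath[OF n X Y XY] .
  finally show ?thesis .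
qed

lemma cm_rep_X_factor_chain:
  assumes cm: "cm_rep k n 2 X Y" and n: "0 < n" and k: "k \<le> n"
  shows "X_factor_chain n (n - k) (xpath n 2 X 0)"
proof
  show "xpath n 2 X 0 0 = 1\<^sub>m 2" by simp
  show "xpath n 2 X 0 n = fps_X ^ (n - k) \<cdot>\<^sub>m 1\<^sub>m 2"
    using cm_rep_xpath_full_cycle[OF cm n k] .
  fix j assume "j < n"
  have "Suc j mod n < n" using n by simp
  then show "\<exists>A B. A \<in> carrier_mat 2 2 \<and> B \<in> carrier_mat 2 2 \<and> A * B = fps_X \<cdot>\<^sub>m 1\<^sub>m 2 \<and>
      B * A = fps_X \<cdot>\<^sub>m 1\<^sub>m 2 \<and> xpath n 2 X 0 (Suc j) = A * xpath n 2 X 0 j"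
    using cm cm_rep_Y_X[OF cm] unfolding cm_rep_def
    by (intro exI[of _ "X (Suc j mod n)"] exI[of _ "Y (Suc j mod n)"]) auto
qed

lemma cm_rep_X_xpath_prev:
  assumes cm: "cm_rep k n r X Y" and k: "k \<le> n" and i: "i < n"
  shows "\<exists>c. c \<noteq> 0 \<and> X i * xpath n r X 0 (prev_v n i) = c \<cdot>\<^sub>m xpath n r X 0 i"
proof (cases i)
  case 0
  obtain m where "n = Suc m"
    using i by (cases n) auto
  then have "X i * xpath n r X 0 (prev_v n i) = xpath n r X 0 n"
    using 0 by (simp add: prev_v_def)
  then show ?thesis
    using cm_rep_xpath_full_cycle[OF cm _ k] 0 i by (intro exI[of _ "fps_X ^ (n - k)"]) auto
next
  case (Suc i')
  then have "X i * xpath n r X 0 (prev_v n i) = xpath n r X 0 i"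
    using i by (simp add: prev_v_def)
  moreover have "xpath n r X 0 i \<in> carrier_mat r r"
    using cm i xpath_carrier[of n X r] unfolding cm_rep_def by auto
  ultimately show ?thesis
    by (intro exI[of _ 1]) simp
qed

lemma subrep_saturated_lines:
  fixes X Y P :: "nat \<Rightarrow> complex fps mat"
  assumes n: "0 < n"
    and X: "\<forall>i<n. X i \<in> carrier_mat 2 2" and Y: "\<forall>i<n. Y i \<in> carrier_mat 2 2"
    and YX: "\<forall>i<n. Y i * X i = fps_X \<cdot>\<^sub>m 1\<^sub>m 2" and P: "\<forall>i<n. P i \<in> carrier_mat 2 2"
    and XP: "\<forall>i<n. \<exists>c. c \<noteq> 0 \<and> X i * P (prev_v n i) = c \<cdot>\<^sub>m P i"
    and u: "u \<in> carrier_vec 2"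
  shows "subrep n 2 X Y (\<lambda>i. saturated_line (P i *\<^sub>v u))"
  unfolding subrep_def
proof (intro conjI allI impI ballI)
  fix i assume i: "i < n"
  then obtain c where c: "c \<noteq> 0" "X i * P (prev_v n i) = c \<cdot>\<^sub>m P i"
    using XP by blast
  have Xi: "X i \<in> carrier_mat 2 2" and Yi: "Y i \<in> carrier_mat 2 2"
    and Pi: "P i \<in> carrier_mat 2 2" and Pp: "P (prev_v n i) \<in> carrier_mat 2 2"
    using X Y P i prev_v_less[OF n] by auto
  have XPu: "X i *\<^sub>v (P (prev_v n i) *\<^sub>v u) = c \<cdot>\<^sub>v (P i *\<^sub>v u)"
    using c(2) Xi Pi Pp u by (simp add: assoc_mult_mat_vec[symmetric] smult_mat_mult_mat_vec)
  show "submod 2 (saturated_line (P i *\<^sub>v u))"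
    by (rule submod_saturated_line)
  show "X i *\<^sub>v v \<in> saturated_line (P i *\<^sub>v u)" if "v \<in> saturated_line (P (prev_v n i) *\<^sub>v u)" for v
    using mult_mat_vec_in_saturated_line[where c = 1, OF Xi _ _ _ c(1) that] XPu Pi Pp u by simp
  have "c \<cdot>\<^sub>v (Y i *\<^sub>v (P i *\<^sub>v u)) = (Y i * X i) *\<^sub>v (P (prev_v n i) *\<^sub>v u)"
    using XPu Xi Yi Pi Pp u by (simp add: mult_mat_vec_smult[symmetric])
  also have "\<dots> = fps_X \<cdot>\<^sub>v (P (prev_v n i) *\<^sub>v u)"
    using YX i Pp u smult_mat_mult_mat_vec[OF one_carrier_mat, of "P (prev_v n i) *\<^sub>v u" 2] by simp
  finally show "Y i *\<^sub>v v \<in> saturated_line (P (prev_v n i) *\<^sub>v u)"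
    if "v \<in> saturated_line (P i *\<^sub>v u)" for v
    using mult_mat_vec_in_saturated_line[OF Yi _ _ _ _ that] Pi Pp u by simp
qed

lemma decomposable_of_splitting_basis:
  fixes X Y P :: "nat \<Rightarrow> complex fps mat"
  assumes n: "0 < n"
    and X: "\<forall>i<n. X i \<in> carrier_mat 2 2" and Y: "\<forall>i<n. Y i \<in> carrier_mat 2 2"
    and YX: "\<forall>i<n. Y i * X i = fps_X \<cdot>\<^sub>m 1\<^sub>m 2"
    and P: "\<forall>i<n. P i \<in> carrier_mat 2 2 \<and> det (P i) \<noteq> 0"
    and XP: "\<forall>i<n. \<exists>c. c \<noteq> 0 \<and> X i * P (prev_v n i) = c \<cdot>\<^sub>m P i"
    and u: "u \<in> carrier_vec 2" and w: "w \<in> carrier_vec 2" and uw: "is_unit (det2 u w)"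
    and bound: "\<forall>i<n. subdegree (det (P i)) \<le> content_val (P i *\<^sub>v u) + content_val (P i *\<^sub>v w)"
  shows "decomposable n 2 X Y"
proof -
  define N1 N2 where "N1 = (\<lambda>i. saturated_line (P i *\<^sub>v u))"
    and "N2 = (\<lambda>i. saturated_line (P i *\<^sub>v w))"
  have Pc: "\<forall>i<n. P i \<in> carrier_mat 2 2" using P by blast
  have sub: "subrep n 2 X Y N1" "subrep n 2 X Y N2"
    using subrep_saturated_lines[OF n X Y YX Pc XP] u w by (simp_all add: N1_def N2_def)
  have u0: "u \<noteq> 0\<^sub>v 2" and w0: "w \<noteq> 0\<^sub>v 2"
    using uw by (auto simp: det2_def)
  have nontrivial: "P 0 *\<^sub>v v \<in> saturated_line (P 0 *\<^sub>v v) - {0\<^sub>v 2}"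
    if "v \<in> carrier_vec 2" "v \<noteq> 0\<^sub>v 2" for v
    using mult_mat_vec_neq_zero[of "P 0" 2 v] P n that by (auto simp: saturated_line_def)
  have direct_sum: "\<exists>!xy. fst xy \<in> N1 i \<and> snd xy \<in> N2 i \<and> v = fst xy + snd xy"
    if i: "i < n" and v: "v \<in> carrier_vec 2" for i v
  proof -
    have Pi: "P i \<in> carrier_mat 2 2" "det (P i) \<noteq> 0" using P i by auto
    have d: "det2 (P i *\<^sub>v u) (P i *\<^sub>v w) = det (P i) * det2 u w"
      using det2_mult_mat_vec[OF Pi(1) u w] .
    then have d0: "det2 (P i *\<^sub>v u) (P i *\<^sub>v w) \<noteq> 0"
      using Pi uw by auto
    have "subdegree (det2 (P i *\<^sub>v u) (P i *\<^sub>v w))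
        \<le> content_val (P i *\<^sub>v u) + content_val (P i *\<^sub>v w)"
    proof -
      have "det2 u w \<noteq> 0" "subdegree (det2 u w) = 0"
        using uw by (auto simp: fps_is_unit_iff)
      then show ?thesis
        using d Pi bound i by (simp add: subdegree_mult)
    qed
    then obtain x y where "x \<in> N1 i" "y \<in> N2 i" "v = x + y"
      using saturated_lines_span[OF _ _ d0 _ v] Pi u w by (auto simp: N1_def N2_def)
    moreover have "N1 i \<inter> N2 i = {0\<^sub>v 2}"
      using saturated_line_inter[OF _ _ d0] Pi u w by (simp add: N1_def N2_def)
    ultimately show ?thesis
      using ex1_decomposition_of_direct_sum[of 2 "N1 i" "N2 i" x y] submod_saturated_line
      by (simp add: N1_def N2_def)
  qed
  have "N1 0 \<noteq> {0\<^sub>v 2}" "N2 0 \<noteq> {0\<^sub>v 2}"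
    using nontrivial[OF u u0] nontrivial[OF w w0] by (auto simp: N1_def N2_def)
  then show ?thesis
    unfolding decomposable_def using sub direct_sum n by blast
qed

lemma cm_rep_rank_2_decomposable:
  assumes cm: "cm_rep k n 2 X Y" and n: "0 < n" and k: "k \<le> n" and n5: "n \<le> 5"
  shows "decomposable n 2 X Y"
proof -
  interpret X_factor_chain n "n - k" "xpath n 2 X 0"
    using cm_rep_X_factor_chain[OF cm n k] .
  obtain u w where u: "u \<in> carrier_vec 2" and w: "w \<in> carrier_vec 2" and uw: "is_unit (det2 u w)"
    and bound: "\<And>i. i < n \<Longrightarrow>
      subdegree (det (xpath n 2 X 0 i))
        \<le> content_val (xpath n 2 X 0 i *\<^sub>v u) + content_val (xpath n 2 X 0 i *\<^sub>v w)"
    using exists_splitting_basis[OF n5] by blast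
  show ?thesis
  proof (rule decomposable_of_splitting_basis[OF n _ _ _ _ _ u w uw])
    show "\<forall>i<n. X i \<in> carrier_mat 2 2" "\<forall>i<n. Y i \<in> carrier_mat 2 2"
      using cm by (auto simp: cm_rep_def)
    show "\<forall>i<n. Y i * X i = fps_X \<cdot>\<^sub>m 1\<^sub>m 2"
      using cm_rep_Y_X[OF cm] by blast
    show "\<forall>i<n. xpath n 2 X 0 i \<in> carrier_mat 2 2 \<and> det (xpath n 2 X 0 i) \<noteq> 0"
      using P_carrier_det by simp
    show "\<forall>i<n. \<exists>c. c \<noteq> 0 \<and> X i * xpath n 2 X 0 (prev_v n i) = c \<cdot>\<^sub>m xpath n 2 X 0 i"
      using cm_rep_X_xpath_prev[OF cm k] by blast
  qed (use bound in blast)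
qed

theorem corollary3p5:
  fixes k n :: nat
  assumes "1 \<le> k" and "k \<le> n - 1" and "n < 6"
  shows "\<not> (\<exists>X Y. cm_rep k n 2 X Y \<and> indecomposable n 2 X Y)"
proof
  assume "\<exists>X Y. cm_rep k n 2 X Y \<and> indecomposable n 2 X Y"
  then obtain X Y where cm: "cm_rep k n 2 X Y" and ind: "indecomposable n 2 X Y"
    by blast
  have "decomposable n 2 X Y"
    using cm_rep_rank_2_decomposable[OF cm] assms by simp
  then show False
    using ind by (simp add: indecomposable_def)
qed

end
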